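(* Let $(\mathbf{V}_\tau,\mathbf{A}_\tau)$ satisfy $\mathbf{1}_N^\top\mathbf{V}_\tau=\mathbf{1}_N^\top$, $\mathbf{1}_T^\top\mathbf{A}_\tau=\mathbf{1}_N^\top$, $\mathbf{V}_\tau\boldsymbol\mu=\boldsymbol\mu$, and let $\mathbf{V}_{\tau+1}=\mathbf{V}_\tau-\eta_V\mathbb{E}\hat\nabla_{\mathbf{V}}l-\eta_V\mathbf{h}_{\mathbf{V},\tau}$ and $\mathbf{A}_{\tau+1}=\mathbf{A}_\tau-\eta_A\mathbb{E}\hat\nabla_{\mathbf{A}}l-\eta_A\mathbf{h}_{\mathbf{A},\tau}$ for step sizes $\eta_V,\eta_A>0$, where expectations are evaluated at $(\mathbf{V}_\tau,\mathbf{A}_\tau)$. Writing $\alpha_V,\alpha_A,\boldsymbol\Delta_V,\boldsymbol\Delta_A$ for the quantities at time $\tau$, $$\alpha_{V,\tau+1}=\alpha_{V,\tau}+\eta_VK_Q(1-\alpha_A\alpha_V)\alpha_A+\eta_V\frac{1-\alpha_V}{T}-\eta_V\alpha_V\|\boldsymbol\Delta_A\|_\mu^2-\frac{\eta_V}{K_P}\langle\mathbf{h}_{\mathbf{V},\tau},\mathbf{P}\rangle_\mu,$$ $$\alpha_{A,\tau+1}=\alpha_{A,\tau}+\eta_AK_P(1-\alpha_V\alpha_A)\alpha_V-\eta_A\alpha_A\|\boldsymbol\Delta_V\|_\mu^2-\frac{\eta_A}{K_Q}\langle\mathbf{h}_{\mathbf{A},\tau},\mathbf{Q}\rangle_\m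u.$$
   Context: $\boldsymbol\mu\in\mathbb{R}^N$ is a probability vector with positive entries; $\mathbf{P}\in\mathbb{R}^{N\times N}$ has nonnegative entries, columns summing to $1$, $\mathbf{P}\boldsymbol\mu=\boldsymbol\mu$; $\mathbf{Q}=(\mathbf{q}^{(1)},\dots,\mathbf{q}^{(N)})\in\mathbb{R}^{T\times N}$ has probability-vector columns. Data: $x_1,\dots,x_{T+1}$ i.i.d. with law $\boldsymbol\mu$, $x_o$ with $\Pr(x_o=n\mid x_{T+1}=k,x_1,\dots,x_T)=\sum_tq^{(k)}_tP_{n,x_t}$; $\mathbf{X}=(\mathbf{e}_{x_1},\dots,\mathbf{e}_{x_T})$; loss $l=\frac12\|\mathbf{e}_{x_o}-\mathbf{V}\mathbf{X}\mathbf{A}\mathbf{e}_{x_{T+1}}\|^2$. Preconditioned gradients: $\hat\nabla_{\mathbf{V}}l=(\mathbf{I}_N-\mathbf{1}\mathbf{1}^\top/N)(\nabla_{\mathbf{V}}l)\operatorname{diag}(1/\boldsymbol\mu)(\mathbf{I}_N-\boldsymbol\mu\boldsymbol\mu^\top/\|\boldsymbol\mu\|^2)$; $\hat\nabla_{\mathbf{A}}l$ has columns $\frac1{\mu_k}(\mathbf{I}_T-\mathbf{1}\mathbf{1}^\top/T)\nabla_{\mathbf{a}^{(k)}}l$. $\mathbf{h}_{\mathbf{V},\tau}=\hat\nabla^{(B)}_{\mathbf{V}}l-\mathbb{E}\hat\nabla_{\mathbf{V}}l$ and $\mathbf{h}_{\mathbf{A},\tau}=\hat\nabla^{(B)}_{\mathbf{A}}l-\mathbb{E}\hat\nabla_{\mathbf{A}}l$,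 where $\hat\nabla^{(B)}$ is the average of the preconditioned gradients over a mini-batch of $B$ fresh samples at step $\tau$. $\langle\mathbf{M},\mathbf{M}'\rangle_\mu=\operatorname{Tr}(\mathbf{M}\operatorname{diag}(\boldsymbol\mu)\mathbf{M}'^\top)$, $\|\mathbf{M}\|_\mu^2=\langle\mathbf{M},\mathbf{M}\rangle_\mu$. $K_P=\|\mathbf{P}\|_\mu^2-\|\boldsymbol\mu\|^2>0$, $K_Q=\|\mathbf{Q}\|_\mu^2-1/T>0$; for any iterate, $\alpha_V=(\langle\mathbf{V},\mathbf{P}\rangle_\mu-\|\boldsymbol\mu\|^2)/K_P$, $\alpha_A=(\langle\mathbf{A},\mathbf{Q}\rangle_\mu-1/T)/K_Q$, $\boldsymbol\Delta_V=\mathbf{V}-\alpha_V\mathbf{P}-(1-\alpha_V)\boldsymbol\mu\mathbf{1}^\top$, $\boldsymbol\Delta_A=\mathbf{A}-\alpha_A\mathbf{Q}-(1-\alpha_A)\mathbf{1}\mathbf{1}^\top/T$. *)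

theory Defs
  imports "HOL-Analysis.Analysis"
begin

text \<open>Conventions: vectors in R^N are functions nat => real indexed by 0..<N;
 matrices are functions nat => nat => real (row index first), an m x N matrix
 being indexed by rows 0..<m and columns 0..<N.  Tokens 1..N are 0..<N.
 A sample is a pair (xs, xo) where xs 0, ..., xs (T-1) are x_1..x_T,
 xs T is x_{T+1}, and xo is x_o.\<close>

type_synonym vec = "nat \<Rightarrow> real"
type_synonym mat = "nat \<Rightarrow> nat \<Rightarrow> real"

definition matmul :: "nat \<Rightarrow> mat \<Rightarrow> mat \<Rightarrow> mat" where
  "matmul n M M' = (\<lambda>i j. \<Sum>k<n. M i k * M' k j)"

definition ip_mu :: "nat \<Rightarrow> nat \<Rightarrow> vec \<Rightarrow> mat \<Rightarrow> mat \<Rightarrow> real" where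
  "ip_mu m N mu M M' = (\<Sum>i<m. \<Sum>j<N. M i j * mu j * M' i j)"

definition normsq_mu :: "nat \<Rightarrow> nat \<Rightarrow> vec \<Rightarrow> mat \<Rightarrow> real" where
  "normsq_mu m N mu M = ip_mu m N mu M M"

definition vnormsq :: "nat \<Rightarrow> vec \<Rightarrow> real" where
  "vnormsq N v = (\<Sum>i<N. (v i)^2)"

definition K_P :: "nat \<Rightarrow> vec \<Rightarrow> mat \<Rightarrow> real" where
  "K_P N mu P = normsq_mu N N mu P - vnormsq N mu"

definition K_Q :: "nat \<Rightarrow> nat \<Rightarrow> vec \<Rightarrow> mat \<Rightarrow> real" where
  "K_Q N T mu Q = normsq_mu T N mu Q - 1 / real T"

definition alpha_V :: "nat \<Rightarrow> vec \<Rightarrow> mat \<Rightarrow> mat \<Rightarrow> real" where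
  "alpha_V N mu P V = (ip_mu N N mu V P - vnormsq N mu) / K_P N mu P"

definition alpha_A :: "nat \<Rightarrow> nat \<Rightarrow> vec \<Rightarrow> mat \<Rightarrow> mat \<Rightarrow> real" where
  "alpha_A N T mu Q A = (ip_mu T N mu A Q - 1 / real T) / K_Q N T mu Q"

definition Delta_V :: "nat \<Rightarrow> vec \<Rightarrow> mat \<Rightarrow> mat \<Rightarrow> mat" where
  "Delta_V N mu P V = (\<lambda>i j. V i j - alpha_V N mu P V * P i j - (1 - alpha_V N mu P V) * mu i)"

definition Delta_A :: "nat \<Rightarrow> nat \<Rightarrow> vec \<Rightarrow> mat \<Rightarrow> mat \<Rightarrow> mat" where
  "Delta_A N T mu Q A = (\<lambda>t j. A t j - alpha_A N T mu Q A * Q t j - (1 - alpha_A N T mu Q A) / real T)"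

text \<open>y = X A e_{x_{T+1}} (an N-vector).\<close>
definition yvec :: "nat \<Rightarrow> mat \<Rightarrow> (nat \<Rightarrow> nat) \<Rightarrow> vec" where
  "yvec T A xs = (\<lambda>n. \<Sum>t<T. (if xs t = n then A t (xs T) else 0))"

text \<open>Residual r = V X A e_{x_{T+1}} - e_{x_o}, so that l = 1/2 ||r||^2.\<close>
definition resid :: "nat \<Rightarrow> nat \<Rightarrow> mat \<Rightarrow> mat \<Rightarrow> (nat \<Rightarrow> nat) \<Rightarrow> nat \<Rightarrow> vec" where
  "resid N T V A xs xo = (\<lambda>i. (\<Sum>n<N. V i n * yvec T A xs n) - (if i = xo then 1 else 0))"

definition grad_V :: "nat \<Rightarrow> nat \<Rightarrow> mat \<Rightarrow> mat \<Rightarrow> (nat \<Rightarrow> nat) \<Rightarrow> nat \<Rightarrow> mat" where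
  "grad_V N T V A xs xo = (\<lambda>i j. resid N T V A xs xo i * yvec T A xs j)"

text \<open>Gradient of l in A (T x N): column k = x_{T+1} equals X^T V^T r, other columns 0.\<close>
definition grad_A :: "nat \<Rightarrow> nat \<Rightarrow> mat \<Rightarrow> mat \<Rightarrow> (nat \<Rightarrow> nat) \<Rightarrow> nat \<Rightarrow> mat" where
  "grad_A N T V A xs xo = (\<lambda>t j. if j = xs T then (\<Sum>i<N. V i (xs t) * resid N T V A xs xo i) else 0)"

definition pgrad_V :: "nat \<Rightarrow> nat \<Rightarrow> vec \<Rightarrow> mat \<Rightarrow> mat \<Rightarrow> (nat \<Rightarrow> nat) \<Rightarrow> nat \<Rightarrow> mat" where
  "pgrad_V N T mu V A xs xo =
     matmul N (matmul N (\<lambda>i j. (if i = j then 1 else 0) - 1 / real N) (grad_V N T V A xs xo))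
              (matmul N (\<lambda>i j. if i = j then 1 / mu i else 0)
                        (\<lambda>i j. (if i = j then 1 else 0) - mu i * mu j / vnormsq N mu))"

definition pgrad_A :: "nat \<Rightarrow> nat \<Rightarrow> vec \<Rightarrow> mat \<Rightarrow> mat \<Rightarrow> (nat \<Rightarrow> nat) \<Rightarrow> nat \<Rightarrow> mat" where
  "pgrad_A N T mu V A xs xo =
     (\<lambda>t j. (1 / mu j) * (grad_A N T V A xs xo t j - (1 / real T) * (\<Sum>s<T. grad_A N T V A xs xo s j)))"

text \<open>Probability of a sample (x_1..x_{T+1}, x_o):
 prod_t mu(x_t) * sum_t q^{(x_{T+1})}_t P_{x_o, x_t}, with q^{(k)}_t = Q t k.\<close>
definition sample_prob :: "nat \<Rightarrow> vec \<Rightarrow> mat \<Rightarrow> mat \<Rightarrow> (nat \<Rightarrow> nat) \<Rightarrow> nat \<Rightarrow> real" where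
  "sample_prob T mu P Q xs xo =
     (\<Prod>t\<le>T. mu (xs t)) * (\<Sum>t<T. Q t (xs T) * P xo (xs t))"

definition sample_seqs :: "nat \<Rightarrow> nat \<Rightarrow> (nat \<Rightarrow> nat) set" where
  "sample_seqs N T = (PiE {..T} (\<lambda>_. {..<N}))"

definition expect_mat :: "nat \<Rightarrow> nat \<Rightarrow> vec \<Rightarrow> mat \<Rightarrow> mat \<Rightarrow>
    ((nat \<Rightarrow> nat) \<Rightarrow> nat \<Rightarrow> mat) \<Rightarrow> mat" where
  "expect_mat N T mu P Q F =
     (\<lambda>i j. \<Sum>xs\<in>sample_seqs N T. \<Sum>xo<N. sample_prob T mu P Q xs xo * F xs xo i j)"

definition batch_mat :: "nat \<Rightarrow> (nat \<Rightarrow> nat \<Rightarrow> nat) \<Rightarrow> (nat \<Rightarrow> nat) \<Rightarrow>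
    ((nat \<Rightarrow> nat) \<Rightarrow> nat \<Rightarrow> mat) \<Rightarrow> mat" where
  "batch_mat B bx bo F = (\<lambda>i j. (1 / real B) * (\<Sum>b<B. F (bx b) (bo b) i j))"

end

theory Submission
  imports Defs
begin

text \<open>
  Pairing an update with \<open>P\<close> (resp. \<open>Q\<close>) is linear, so the new \<open>\<alpha>\<^sub>V\<close>, \<open>\<alpha>\<^sub>A\<close> are
  determined by the noise terms and by the expected pairings of the preconditioned gradients
  with \<open>P\<close>, \<open>Q\<close>.  Up to preconditioning the gradients are \<open>r y\<^sup>T\<close> and \<open>X\<^sup>T V\<^sup>T r\<close>, where
  \<open>y = X A e\<close> for the one-hot query \<open>e\<close> and the residual is \<open>r = V y - e\<^sub>o\<close>.  Both the
  prediction \<open>V y\<close> and the target \<open>e\<^sub>o\<close> turn each pairing into a bilinear form in the tokens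
  at two positions \<open>t, s\<close>; averaging over i.i.d. tokens gives a \<open>\<mu>\<close>-weighted trace when
  \<open>t = s\<close> and a \<open>\<parallel>\<mu>\<parallel>\<^sup>2\<close> term when \<open>t \<noteq> s\<close>, and the \<open>\<parallel>\<mu>\<parallel>\<^sup>2\<close> terms of prediction and
  target cancel.  The projection in the preconditioner of \<open>V\<close> only adds a term linear in
  \<open>r\<close>, which vanishes in expectation.  The result is rewritten in terms of \<open>\<alpha>\<close> and \<open>\<Delta>\<close>
  by the orthogonal decompositions \<open>\<parallel>V\<parallel>\<^sup>2 = \<parallel>\<Delta>\<^sub>V\<parallel>\<^sup>2 + \<parallel>\<mu>\<parallel>\<^sup>2 + \<alpha>\<^sub>V\<^sup>2 K\<^sub>P\<close> and
  \<open>\<parallel>A\<parallel>\<^sup>2 = \<parallel>\<Delta>\<^sub>A\<parallel>\<^sup>2 + 1/T + \<alpha>\<^sub>A\<^sup>2 K\<^sub>Q\<close> (norms weighted by \<open>\<mu>\<close>).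
\<close>

lemma ip_mu_commute: "ip_mu m N mu X Y = ip_mu m N mu Y X"
  unfolding ip_mu_def by (simp add: mult_ac)

lemma ip_mu_diff_left:
  "ip_mu m N mu (\<lambda>i j. X i j - Y i j) M = ip_mu m N mu X M - ip_mu m N mu Y M"
  unfolding ip_mu_def by (simp add: left_diff_distrib sum_subtractf)

lemma ip_mu_scale_left: "ip_mu m N mu (\<lambda>i j. c * X i j) M = c * ip_mu m N mu X M"
  unfolding ip_mu_def by (simp add: sum_distrib_left mult.assoc)

lemma ip_mu_sum_left:
  "ip_mu m N mu (\<lambda>i j. \<Sum>x\<in>S. F x i j) M = (\<Sum>x\<in>S. ip_mu m N mu (F x) M)"
  unfolding ip_mu_def sum_distrib_right by (simp only: sum.swap[of _ S])

lemma normsq_mu_diff_scaled: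
  "normsq_mu m N mu (\<lambda>i j. X i j - a * Y i j)
     = normsq_mu m N mu X - 2 * a * ip_mu m N mu X Y + a\<^sup>2 * normsq_mu m N mu Y"
  unfolding normsq_mu_def ip_mu_diff_left ip_mu_scale_left
  by (subst (1 2) ip_mu_commute)
    (simp add: ip_mu_diff_left ip_mu_scale_left ip_mu_commute[of m N mu Y X] power2_eq_square algebra_simps)

lemma ip_mu_center_mu:
  assumes mu_sum: "(\<Sum>i<N. mu i) = 1"
    and X_mu: "\<forall>i<N. (\<Sum>j<N. X i j * mu j) = mu i"
    and Y_mu: "\<forall>i<N. (\<Sum>j<N. Y i j * mu j) = mu i"
  shows "ip_mu N N mu (\<lambda>i j. X i j - mu i) (\<lambda>i j. Y i j - mu i) = ip_mu N N mu X Y - vnormsq N mu"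
proof -
  have row: "(\<Sum>i<N. \<Sum>j<N. Z i j * mu j * mu i) = vnormsq N mu"
    if "\<forall>i<N. (\<Sum>j<N. Z i j * mu j) = mu i" for Z
    using that unfolding vnormsq_def power2_eq_square
    by (simp add: sum_distrib_right[symmetric])
  have "ip_mu N N mu (\<lambda>i j. X i j - mu i) (\<lambda>i j. Y i j - mu i)
      = ip_mu N N mu X Y - (\<Sum>i<N. \<Sum>j<N. X i j * mu j * mu i) - (\<Sum>i<N. \<Sum>j<N. Y i j * mu j * mu i)
        + (\<Sum>i<N. \<Sum>j<N. mu i * mu j * mu i)"
    unfolding ip_mu_def by (simp add: algebra_simps sum_subtractf sum.distrib)
  also have "(\<Sum>i<N. \<Sum>j<N. mu i * mu j * mu i) = vnormsq N mu"
    using row[of "\<lambda>i j. mu i"] mu_sum by (simp add: sum_distrib_left[symmetric] mult_ac)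
  finally show ?thesis using row X_mu Y_mu by simp
qed

lemma ip_mu_center_uniform:
  assumes mu_sum: "(\<Sum>j<N. mu j) = 1"
    and X_cols: "\<forall>j<N. (\<Sum>t<T. X t j) = 1"
    and Y_cols: "\<forall>j<N. (\<Sum>t<T. Y t j) = 1"
  shows "ip_mu T N mu (\<lambda>t j. X t j - 1 / real T) (\<lambda>t j. Y t j - 1 / real T)
       = ip_mu T N mu X Y - 1 / real T"
proof -
  have col: "(\<Sum>t<T. \<Sum>j<N. Z t j * mu j * c) = c" if "\<forall>j<N. (\<Sum>t<T. Z t j) = 1" for Z c
    using that mu_sum by (subst sum.swap) (simp add: sum_distrib_right[symmetric])
  have const: "(\<Sum>t<T. \<Sum>j<N. c * mu j * c) = real T * c * c" for c
    using mu_sum by (simp add: sum_distrib_left[symmetric] sum_distrib_right[symmetric])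
  have "ip_mu T N mu (\<lambda>t j. X t j - 1 / real T) (\<lambda>t j. Y t j - 1 / real T)
      = ip_mu T N mu X Y - (\<Sum>t<T. \<Sum>j<N. X t j * mu j * (1 / real T))
        - (\<Sum>t<T. \<Sum>j<N. Y t j * mu j * (1 / real T))
        + (\<Sum>t<T. \<Sum>j<N. 1 / real T * mu j * (1 / real T))"
    unfolding ip_mu_def by (simp only: algebra_simps sum_subtractf sum.distrib)
  then show ?thesis
    unfolding col[OF X_cols] col[OF Y_cols] const by simp
qed

lemma ip_mu_shift_uniform:
  assumes mu_sum: "(\<Sum>j<N. mu j) = 1" and X_cols: "\<forall>j<N. (\<Sum>t<T. X t j) = 1"
  shows "ip_mu T N mu (\<lambda>t j. Y t j - 1 / real T) X = ip_mu T N mu Y X - 1 / real T"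
proof -
  have "ip_mu T N mu (\<lambda>t j. 1 / real T) X = (\<Sum>j<N. mu j * (\<Sum>t<T. X t j)) / real T"
    unfolding ip_mu_def by (subst sum.swap) (simp add: sum_distrib_left sum_divide_distrib mult_ac)
  then show ?thesis
    using X_cols mu_sum by (simp add: ip_mu_diff_left)
qed

lemma sum_diag_split:
  fixes x z :: real
  assumes "finite I"
  shows "(\<Sum>t\<in>I. \<Sum>s\<in>I. (if t = s then x else z) * m t s)
       = (x - z) * (\<Sum>t\<in>I. m t t) + z * (\<Sum>t\<in>I. \<Sum>s\<in>I. m t s)"
proof -
  have "(\<Sum>t\<in>I. \<Sum>s\<in>I. (if t = s then x else z) * m t s)
      = (\<Sum>t\<in>I. \<Sum>s\<in>I. (if t = s then (x - z) * m t s else 0) + z * m t s)"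
    by (intro sum.cong refl) (simp add: algebra_simps)
  then show ?thesis
    using assms by (simp add: sum.distrib sum_distrib_left)
qed

lemma sum_sum_weighted_product:
  fixes mu :: vec
  shows "(\<Sum>t<T. \<Sum>s<T. \<Sum>k<N. mu k * (U t k * W s k))
     = (\<Sum>k<N. mu k * (\<Sum>t<T. U t k) * (\<Sum>s<T. W s k))"
proof -
  have "(\<Sum>t<T. \<Sum>s<T. \<Sum>k<N. mu k * (U t k * W s k))
      = (\<Sum>k<N. \<Sum>t<T. \<Sum>s<T. mu k * (U t k * W s k))"
    by (subst sum.swap, subst (2) sum.swap) (rule refl)
  also have "\<dots> = (\<Sum>k<N. mu k * (\<Sum>t<T. U t k) * (\<Sum>s<T. W s k))"
    by (simp only: sum_distrib_left[symmetric] sum_distrib_right[symmetric] mult.assoc)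
  finally show ?thesis .
qed

definition iid_expect :: "nat \<Rightarrow> nat \<Rightarrow> vec \<Rightarrow> ((nat \<Rightarrow> nat) \<Rightarrow> real) \<Rightarrow> real"
  where
  "iid_expect N T mu g = (\<Sum>xs\<in>sample_seqs N T. (\<Prod>i\<le>T. mu (xs i)) * g xs)"

lemma sample_seqs_lt: "xs \<in> sample_seqs N T \<Longrightarrow> i \<le> T \<Longrightarrow> xs i < N"
  unfolding sample_seqs_def by auto

lemma iid_expect_cong:
  "(\<And>xs. xs \<in> sample_seqs N T \<Longrightarrow> f xs = g xs) \<Longrightarrow> iid_expect N T mu f = iid_expect N T mu g"
  unfolding iid_expect_def by simp

lemma iid_expect_sum:
  "iid_expect N T mu (\<lambda>xs. \<Sum>i\<in>I. f i xs) = (\<Sum>i\<in>I. iid_expect N T mu (f i))"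
  unfolding iid_expect_def sum_distrib_left by (rule sum.swap)

lemma iid_expect_prod_coords:
  assumes mu_sum: "(\<Sum>a<N. mu a) = 1" and J: "J \<subseteq> {..T}"
  shows "iid_expect N T mu (\<lambda>xs. \<Prod>j\<in>J. f j (xs j)) = (\<Prod>j\<in>J. \<Sum>a<N. mu a * f j a)"
proof -
  let ?f = "\<lambda>i a. if i \<in> J then f i a else 1"
  have restrict: "prod g J = (\<Prod>i\<le>T. if i \<in> J then g i else 1)" for g :: "nat \<Rightarrow> real"
    using prod.inter_restrict[of "{..T}" g J] J by (simp add: Int_absorb1)
  have "iid_expect N T mu (\<lambda>xs. \<Prod>j\<in>J. f j (xs j))
      = (\<Sum>xs\<in>sample_seqs N T. \<Prod>i\<le>T. mu (xs i) * ?f i (xs i))"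
    unfolding iid_expect_def prod.distrib restrict by (simp add: if_distrib cong: if_cong)
  also have "\<dots> = (\<Prod>i\<le>T. \<Sum>a<N. mu a * ?f i a)"
    unfolding sample_seqs_def by (rule prod_sum_PiE[symmetric]) auto
  also have "\<dots> = (\<Prod>j\<in>J. \<Sum>a<N. mu a * f j a)"
    unfolding restrict using mu_sum by (intro prod.cong) auto
  finally show ?thesis .
qed

lemma iid_expect_pair:
  assumes mu_sum: "(\<Sum>a<N. mu a) = 1" and "s < T" "t < T"
  shows "iid_expect N T mu (\<lambda>xs. g (xs s) * h (xs t) * c (xs T))
     = (if s = t then (\<Sum>a<N. mu a * (g a * h a)) else (\<Sum>a<N. mu a * g a) * (\<Sum>a<N. mu a * h a))
       * (\<Sum>a<N. mu a * c a)"
proof (cases "s = t")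
  case True
  let ?f = "\<lambda>j a. if j = T then c a else g a * h a"
  have "iid_expect N T mu (\<lambda>xs. g (xs s) * h (xs t) * c (xs T))
      = iid_expect N T mu (\<lambda>xs. \<Prod>j\<in>{s, T}. ?f j (xs j))"
    using True \<open>s < T\<close> by (simp add: mult.commute)
  also have "\<dots> = (\<Prod>j\<in>{s, T}. \<Sum>a<N. mu a * ?f j a)"
    using \<open>s < T\<close> by (intro iid_expect_prod_coords[OF mu_sum]) auto
  finally show ?thesis using True \<open>s < T\<close> by simp
next
  case False
  let ?f = "\<lambda>j a. if j = T then c a else if j = s then g a else h a"
  have "iid_expect N T mu (\<lambda>xs. g (xs s) * h (xs t) * c (xs T))
      = iid_expect N T mu (\<lambda>xs. \<Prod>j\<in>{s, t, T}. ?f j (xs j))"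
    using False assms(2,3) by (simp add: mult_ac)
  also have "\<dots> = (\<Prod>j\<in>{s, t, T}. \<Sum>a<N. mu a * ?f j a)"
    using assms(2,3) by (intro iid_expect_prod_coords[OF mu_sum]) auto
  finally show ?thesis using False assms(2,3) by (simp add: mult_ac)
qed

lemma iid_expect_bilinear:
  assumes mu_sum: "(\<Sum>a<N. mu a) = 1"
    and X_mu: "\<forall>n<N. (\<Sum>a<N. X n a * mu a) = mu n"
    and Y_mu: "\<forall>n<N. (\<Sum>a<N. Y n a * mu a) = mu n"
  shows "iid_expect N T mu (\<lambda>xs. \<Sum>t<T. \<Sum>s<T. U t (xs T) * W s (xs T) * (\<Sum>n<N. X n (xs t) * Y n (xs s)))
    = (ip_mu N N mu X Y - vnormsq N mu) * ip_mu T N mu U W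
      + vnormsq N mu * (\<Sum>k<N. mu k * (\<Sum>t<T. U t k) * (\<Sum>s<T. W s k))"
proof -
  let ?m = "\<lambda>t s. \<Sum>k<N. mu k * (U t k * W s k)"
  have pair: "iid_expect N T mu (\<lambda>xs. X n (xs t) * Y n (xs s) * (U t (xs T) * W s (xs T)))
      = (if t = s then \<Sum>a<N. mu a * (X n a * Y n a) else mu n * mu n) * ?m t s"
    if "t < T" "s < T" "n < N" for t s n
    using iid_expect_pair[OF mu_sum that(1,2), of "X n" "Y n" "\<lambda>k. U t k * W s k"] X_mu Y_mu that
    by (simp add: mult.commute)
  have "iid_expect N T mu (\<lambda>xs. \<Sum>t<T. \<Sum>s<T. U t (xs T) * W s (xs T) * (\<Sum>n<N. X n (xs t) * Y n (xs s)))
      = (\<Sum>t<T. \<Sum>s<T. \<Sum>n<N.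
           iid_expect N T mu (\<lambda>xs. X n (xs t) * Y n (xs s) * (U t (xs T) * W s (xs T))))"
    by (simp add: iid_expect_sum sum_distrib_left mult_ac)
  also have "\<dots> = (\<Sum>t<T. \<Sum>s<T. \<Sum>n<N.
      (if t = s then \<Sum>a<N. mu a * (X n a * Y n a) else mu n * mu n) * ?m t s)"
    using pair by (intro sum.cong refl) simp
  also have "\<dots> = (\<Sum>t<T. \<Sum>s<T. (if t = s then ip_mu N N mu X Y else vnormsq N mu) * ?m t s)"
  proof (intro sum.cong refl)
    fix t s
    have "(\<Sum>n<N. \<Sum>a<N. mu a * (X n a * Y n a)) = ip_mu N N mu X Y"
      unfolding ip_mu_def by (simp add: mult_ac)
    moreover have "(\<Sum>n<N. mu n * mu n) = vnormsq N mu"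
      unfolding vnormsq_def by (simp add: power2_eq_square)
    ultimately show "(\<Sum>n<N. (if t = s then \<Sum>a<N. mu a * (X n a * Y n a) else mu n * mu n) * ?m t s)
        = (if t = s then ip_mu N N mu X Y else vnormsq N mu) * ?m t s"
      by (cases "t = s") (simp_all flip: sum_distrib_right)
  qed
  also have "\<dots> = (ip_mu N N mu X Y - vnormsq N mu) * (\<Sum>t<T. ?m t t)
      + vnormsq N mu * (\<Sum>t<T. \<Sum>s<T. ?m t s)"
    by (rule sum_diag_split) simp
  finally show ?thesis
    unfolding sum_sum_weighted_product by (simp add: ip_mu_def mult_ac)
qed

lemma iid_expect_linear:
  assumes mu_sum: "(\<Sum>a<N. mu a) = 1" and U_cols: "\<forall>k<N. (\<Sum>t<T. U t k) = 1"
  shows "iid_expect N T mu (\<lambda>xs. \<Sum>t<T. U t (xs T) * g (xs t)) = (\<Sum>a<N. mu a * g a)"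
proof -
  have "iid_expect N T mu (\<lambda>xs. \<Sum>t<T. U t (xs T) * g (xs t))
      = (\<Sum>t<T. (\<Sum>a<N. mu a * g a) * (\<Sum>k<N. mu k * U t k))"
    unfolding iid_expect_sum
    using iid_expect_pair[OF mu_sum, where s=t and t=t and g=g and h="\<lambda>_. 1" and c="U t" for t]
    by (intro sum.cong refl) (simp add: mult.commute)
  also have "\<dots> = (\<Sum>a<N. mu a * g a) * (\<Sum>k<N. mu k * (\<Sum>t<T. U t k))"
    by (simp add: sum_distrib_left sum.swap[of _ "{..<T}"])
  finally show ?thesis using U_cols mu_sum by simp
qed

definition sample_expect ::
    "nat \<Rightarrow> nat \<Rightarrow> vec \<Rightarrow> mat \<Rightarrow> mat \<Rightarrow> ((nat \<Rightarrow> nat) \<Rightarrow> nat \<Rightarrow> real) \<Rightarrow> real"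
  where
  "sample_expect N T mu P Q F = (\<Sum>xs\<in>sample_seqs N T. \<Sum>xo<N. sample_prob T mu P Q xs xo * F xs xo)"

lemma ip_mu_expect_mat:
  "ip_mu m N mu (expect_mat N T mu P Q F) M = sample_expect N T mu P Q (\<lambda>xs xo. ip_mu m N mu (F xs xo) M)"
  unfolding expect_mat_def sample_expect_def ip_mu_sum_left ip_mu_scale_left ..

lemma sample_expect_cong:
  "(\<And>xs xo. xs \<in> sample_seqs N T \<Longrightarrow> xo < N \<Longrightarrow> F xs xo = G xs xo)
   \<Longrightarrow> sample_expect N T mu P Q F = sample_expect N T mu P Q G"
  unfolding sample_expect_def by simp

lemma sample_expect_diff:
  "sample_expect N T mu P Q (\<lambda>xs xo. F xs xo - G xs xo)
     = sample_expect N T mu P Q F - sample_expect N T mu P Q G"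
  unfolding sample_expect_def by (simp add: right_diff_distrib sum_subtractf)

lemma sample_expect_scale:
  "sample_expect N T mu P Q (\<lambda>xs xo. c * F xs xo) = c * sample_expect N T mu P Q F"
  unfolding sample_expect_def by (simp add: sum_distrib_left mult_ac)

lemma sample_expect_sum:
  "sample_expect N T mu P Q (\<lambda>xs xo. \<Sum>i\<in>I. F i xs xo) = (\<Sum>i\<in>I. sample_expect N T mu P Q (F i))"
  unfolding sample_expect_def sum_distrib_left by (simp add: sum.swap[of _ I])

lemma sample_expect_eq_iid:
  "sample_expect N T mu P Q F
     = iid_expect N T mu (\<lambda>xs. \<Sum>u<T. Q u (xs T) * (\<Sum>xo<N. P xo (xs u) * F xs xo))"
  unfolding sample_expect_def iid_expect_def sample_prob_def
proof (intro sum.cong refl)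
  fix xs :: "nat \<Rightarrow> nat"
  show "(\<Sum>xo<N. (\<Prod>t\<le>T. mu (xs t)) * (\<Sum>t<T. Q t (xs T) * P xo (xs t)) * F xs xo)
      = (\<Prod>i\<le>T. mu (xs i)) * (\<Sum>u<T. Q u (xs T) * (\<Sum>xo<N. P xo (xs u) * F xs xo))"
    by (simp add: sum_distrib_left sum_distrib_right mult_ac sum.swap[of _ "{..<N}"])
qed

lemma yvec_pairing:
  assumes xs: "xs \<in> sample_seqs N T"
  shows "(\<Sum>n<N. M n * yvec T A xs n) = (\<Sum>t<T. A t (xs T) * M (xs t))"
proof -
  have "(\<Sum>n<N. M n * yvec T A xs n) = (\<Sum>t<T. \<Sum>n<N. if xs t = n then A t (xs T) * M n else 0)"
    unfolding yvec_def sum_distrib_left by (subst sum.swap) (simp add: if_distrib mult.commute cong: if_cong)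
  also have "\<dots> = (\<Sum>t<T. A t (xs T) * M (xs t))"
    using sample_seqs_lt[OF xs] by (intro sum.cong refl) simp
  finally show ?thesis .
qed

lemma resid_eq:
  assumes "xs \<in> sample_seqs N T"
  shows "resid N T V A xs xo i = (\<Sum>t<T. A t (xs T) * V i (xs t)) - (if i = xo then 1 else 0)"
  unfolding resid_def yvec_pairing[OF assms, of "V i"] ..

locale constrained_iterate =
  fixes N T :: nat and mu :: vec and P Q V A :: mat
  assumes mu_pos: "\<forall>i<N. mu i > 0"
    and mu_sum: "(\<Sum>i<N. mu i) = 1"
    and P_cols: "\<forall>j<N. (\<Sum>i<N. P i j) = 1"
    and P_mu: "\<forall>i<N. (\<Sum>j<N. P i j * mu j) = mu i"
    and Q_cols: "\<forall>j<N. (\<Sum>t<T. Q t j) = 1"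
    and V_cols: "\<forall>j<N. (\<Sum>i<N. V i j) = 1"
    and A_cols: "\<forall>j<N. (\<Sum>t<T. A t j) = 1"
    and V_mu: "\<forall>i<N. (\<Sum>j<N. V i j * mu j) = mu i"
begin

lemma yvec_sum_one:
  assumes "xs \<in> sample_seqs N T"
  shows "(\<Sum>n<N. yvec T A xs n) = 1"
  using yvec_pairing[OF assms, of "\<lambda>_. 1" A] A_cols sample_seqs_lt[OF assms, of T] by simp

lemma resid_sum_zero:
  assumes xs: "xs \<in> sample_seqs N T" and xo: "xo < N"
  shows "(\<Sum>i<N. resid N T V A xs xo i) = 0"
proof -
  have "(\<Sum>i<N. \<Sum>n<N. V i n * yvec T A xs n) = (\<Sum>n<N. (\<Sum>i<N. V i n) * yvec T A xs n)"
    by (subst sum.swap) (simp add: sum_distrib_right)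
  also have "\<dots> = 1"
    using V_cols yvec_sum_one[OF xs] by simp
  finally show ?thesis
    unfolding resid_def using xo by (simp add: sum_subtractf)
qed

lemma sample_expect_indep_xo:
  "sample_expect N T mu P Q (\<lambda>xs xo. g xs) = iid_expect N T mu g"
proof -
  have "(\<Sum>u<T. Q u (xs T) * (\<Sum>xo<N. P xo (xs u) * g xs)) = g xs" if "xs \<in> sample_seqs N T" for xs
    using P_cols Q_cols sample_seqs_lt[OF that]
    by (simp add: sum_distrib_right[symmetric] mult.assoc[symmetric])
  then show ?thesis
    unfolding sample_expect_eq_iid by (rule iid_expect_cong)
qed

lemma expect_resid_zero:
  assumes i: "i < N"
  shows "sample_expect N T mu P Q (\<lambda>xs xo. resid N T V A xs xo i) = 0"
proof -
  have "sample_expect N T mu P Q (\<lambda>xs xo. resid N T V A xs xo i)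
      = sample_expect N T mu P Q (\<lambda>xs xo. \<Sum>t<T. A t (xs T) * V i (xs t))
        - sample_expect N T mu P Q (\<lambda>xs xo. if i = xo then 1 else 0)"
    unfolding sample_expect_diff[symmetric] by (rule sample_expect_cong) (rule resid_eq)
  also have "sample_expect N T mu P Q (\<lambda>xs xo. \<Sum>t<T. A t (xs T) * V i (xs t)) = mu i"
    unfolding sample_expect_indep_xo iid_expect_linear[OF mu_sum A_cols]
    using V_mu i by (simp add: mult.commute)
  also have "sample_expect N T mu P Q (\<lambda>xs xo. if i = xo then 1 else 0) = mu i"
    unfolding sample_expect_eq_iid
    using i iid_expect_linear[OF mu_sum Q_cols, of "P i"] P_mu
    by (simp add: mult.commute if_distrib cong: if_cong)
  finally show ?thesis by simp
qed

lemma expect_resid_pairing: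
  assumes M_mu: "\<forall>i<N. (\<Sum>j<N. M i j * mu j) = mu i"
  shows "sample_expect N T mu P Q (\<lambda>xs xo. \<Sum>t<T. Z t (xs T) * (\<Sum>i<N. M i (xs t) * resid N T V A xs xo i))
     = (ip_mu N N mu M V - vnormsq N mu) * ip_mu T N mu Z A
       - (ip_mu N N mu P M - vnormsq N mu) * ip_mu T N mu Q Z"
proof -
  \<comment> \<open>Since \<open>A\<close> and \<open>Q\<close> have unit column sums, prediction and target share
    this \<open>\<parallel>\<mu>\<parallel>\<^sup>2\<close> term.\<close>
  let ?c = "\<Sum>k<N. mu k * (\<Sum>t<T. Z t k)"
  have residual_split: "(\<Sum>t<T. Z t (xs T) * (\<Sum>i<N. M i (xs t) * resid N T V A xs xo i))
      = (\<Sum>t<T. \<Sum>s<T. Z t (xs T) * A s (xs T) * (\<Sum>i<N. M i (xs t) * V i (xs s)))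
        - (\<Sum>t<T. Z t (xs T) * M xo (xs t))"
    if xs: "xs \<in> sample_seqs N T" and xo: "xo < N" for xs xo
  proof -
    have "(\<Sum>i<N. M i (xs t) * resid N T V A xs xo i)
        = (\<Sum>s<T. A s (xs T) * (\<Sum>i<N. M i (xs t) * V i (xs s))) - M xo (xs t)" for t
      unfolding resid_eq[OF xs] right_diff_distrib sum_subtractf sum_distrib_left
      using xo by (subst sum.swap) (simp add: mult_ac if_distrib cong: if_cong)
    then show ?thesis
      by (simp add: right_diff_distrib sum_subtractf sum_distrib_left mult_ac)
  qed
  have prediction: "sample_expect N T mu P Q
      (\<lambda>xs xo. \<Sum>t<T. \<Sum>s<T. Z t (xs T) * A s (xs T) * (\<Sum>i<N. M i (xs t) * V i (xs s)))
      = (ip_mu N N mu M V - vnormsq N mu) * ip_mu T N mu Z A + vnormsq N mu * ?c"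
    unfolding sample_expect_indep_xo iid_expect_bilinear[OF mu_sum M_mu V_mu]
    using A_cols by simp
  have "sample_expect N T mu P Q (\<lambda>xs xo. \<Sum>t<T. Z t (xs T) * M xo (xs t))
      = iid_expect N T mu (\<lambda>xs. \<Sum>u<T. \<Sum>t<T. Q u (xs T) * Z t (xs T) * (\<Sum>n<N. P n (xs u) * M n (xs t)))"
    unfolding sample_expect_eq_iid
    by (intro iid_expect_cong sum.cong refl)
      (simp add: sum_distrib_left mult_ac sum.swap[of _ "{..<N}" "{..<T}"])
  also have "\<dots> = (ip_mu N N mu P M - vnormsq N mu) * ip_mu T N mu Q Z + vnormsq N mu * ?c"
    unfolding iid_expect_bilinear[OF mu_sum P_mu M_mu] using Q_cols by simp
  finally have target: "sample_expect N T mu P Q (\<lambda>xs xo. \<Sum>t<T. Z t (xs T) * M xo (xs t))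
      = (ip_mu N N mu P M - vnormsq N mu) * ip_mu T N mu Q Z + vnormsq N mu * ?c" .
  have "sample_expect N T mu P Q (\<lambda>xs xo. \<Sum>t<T. Z t (xs T) * (\<Sum>i<N. M i (xs t) * resid N T V A xs xo i))
      = sample_expect N T mu P Q
          (\<lambda>xs xo. \<Sum>t<T. \<Sum>s<T. Z t (xs T) * A s (xs T) * (\<Sum>i<N. M i (xs t) * V i (xs s)))
        - sample_expect N T mu P Q (\<lambda>xs xo. \<Sum>t<T. Z t (xs T) * M xo (xs t))"
    unfolding sample_expect_diff[symmetric] by (rule sample_expect_cong) (rule residual_split)
  then show ?thesis
    unfolding prediction target by simp
qed

lemma pgrad_V_entry:
  assumes xs: "xs \<in> sample_seqs N T" and xo: "xo < N" and ij: "i < N" "j < N"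
  shows "pgrad_V N T mu V A xs xo i j
       = resid N T V A xs xo i * (yvec T A xs j / mu j - mu j / vnormsq N mu)"
proof -
  let ?r = "resid N T V A xs xo" and ?y = "yvec T A xs"
  have left: "matmul N (\<lambda>i j. (if i = j then 1 else 0) - 1 / real N) (grad_V N T V A xs xo) i l
      = ?r i * ?y l" for l
  proof -
    have "matmul N (\<lambda>i j. (if i = j then 1 else 0) - 1 / real N) (grad_V N T V A xs xo) i l
        = (\<Sum>k<N. if i = k then ?r k * ?y l else 0) - (\<Sum>k<N. ?r k) * ?y l / real N"
      unfolding matmul_def grad_V_def sum_divide_distrib sum_distrib_right sum_subtractf[symmetric]
      by (intro sum.cong refl) (simp add: algebra_simps)
    then show ?thesis
      using ij resid_sum_zero[OF xs xo] by simp
  qed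
  have right: "matmul N (\<lambda>i j. if i = j then 1 / mu i else 0)
        (\<lambda>i j. (if i = j then 1 else 0) - mu i * mu j / vnormsq N mu) l j
      = ((if l = j then 1 else 0) - mu l * mu j / vnormsq N mu) / mu l" if "l < N" for l
    unfolding matmul_def using that by (simp add: if_distrib[where f = "\<lambda>a. a * z" for z] cong: if_cong)
  have "pgrad_V N T mu V A xs xo i j
      = (\<Sum>l<N. ?r i * ?y l * (((if l = j then 1 else 0) - mu l * mu j / vnormsq N mu) / mu l))"
    unfolding pgrad_V_def matmul_def[of N "matmul N _ _"] using left right by (intro sum.cong refl) auto
  also have "\<dots> = (\<Sum>l<N. if l = j then ?r i * ?y l / mu l else 0)
      - ?r i * (mu j / vnormsq N mu) * (\<Sum>l<N. ?y l)"
  proof -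
    have "?r i * ?y l * (((if l = j then 1 else 0) - mu l * mu j / vnormsq N mu) / mu l)
        = (if l = j then ?r i * ?y l / mu l else 0) - ?r i * (mu j / vnormsq N mu) * ?y l" if "l < N" for l
      using mu_pos that by (cases "l = j") (auto simp: field_simps)
    then show ?thesis by (simp add: sum_subtractf sum_distrib_left)
  qed
  also have "\<dots> = ?r i * (?y j / mu j - mu j / vnormsq N mu)"
    using ij yvec_sum_one[OF xs] by (simp add: right_diff_distrib)
  finally show ?thesis .
qed

lemma ip_pgrad_V:
  assumes xs: "xs \<in> sample_seqs N T" and xo: "xo < N"
  shows "ip_mu N N mu (pgrad_V N T mu V A xs xo) P
       = (\<Sum>t<T. A t (xs T) * (\<Sum>i<N. P i (xs t) * resid N T V A xs xo i))
         - (\<Sum>i<N. (\<Sum>j<N. P i j * (mu j)\<^sup>2) / vnormsq N mu * resid N T V A xs xo i)"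
proof -
  let ?r = "resid N T V A xs xo" and ?y = "yvec T A xs"
  have "ip_mu N N mu (pgrad_V N T mu V A xs xo) P
      = (\<Sum>i<N. \<Sum>j<N. ?r i * (?y j / mu j - mu j / vnormsq N mu) * mu j * P i j)"
    unfolding ip_mu_def using pgrad_V_entry[OF xs xo] by simp
  also have "\<dots> = (\<Sum>i<N. ?r i * (\<Sum>j<N. P i j * ?y j))
      - (\<Sum>i<N. (\<Sum>j<N. P i j * (mu j)\<^sup>2) / vnormsq N mu * ?r i)"
  proof -
    have "?r i * (?y j / mu j - mu j / vnormsq N mu) * mu j * P i j
        = ?r i * (P i j * ?y j) - P i j * (mu j)\<^sup>2 * ?r i / vnormsq N mu" if "j < N" for i j
      using mu_pos that by (auto simp: field_simps power2_eq_square)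
    then show ?thesis
      by (simp add: sum_subtractf sum_distrib_left sum_distrib_right sum_divide_distrib)
  qed
  also have "(\<Sum>i<N. ?r i * (\<Sum>j<N. P i j * ?y j)) = (\<Sum>t<T. A t (xs T) * (\<Sum>i<N. P i (xs t) * ?r i))"
    unfolding yvec_pairing[OF xs] sum_distrib_left
    by (subst sum.swap) (simp add: mult_ac)
  finally show ?thesis .
qed

lemma ip_pgrad_A:
  assumes xs: "xs \<in> sample_seqs N T"
  shows "ip_mu T N mu (pgrad_A N T mu V A xs xo) Q
       = (\<Sum>t<T. (Q t (xs T) - 1 / real T) * (\<Sum>i<N. V i (xs t) * resid N T V A xs xo i))"
proof -
  define w where "w t = (\<Sum>i<N. V i (xs t) * resid N T V A xs xo i)" for t
  define m where "m = (\<Sum>s<T. w s) / real T"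
  let ?k = "xs T"
  have k: "?k < N" using sample_seqs_lt[OF xs] by simp
  have grad: "grad_A N T V A xs xo t j = (if j = ?k then w t else 0)" for t j
    unfolding grad_A_def w_def by simp
  have "ip_mu T N mu (pgrad_A N T mu V A xs xo) Q
      = (\<Sum>t<T. \<Sum>j<N. if j = ?k then Q t ?k * (w t - m) else 0)"
    unfolding ip_mu_def pgrad_A_def grad m_def
    using mu_pos by (intro sum.cong refl) (auto simp: field_simps)
  also have "\<dots> = (\<Sum>t<T. Q t ?k * w t) - (\<Sum>t<T. Q t ?k) * m"
    using k by (simp add: right_diff_distrib sum_subtractf sum_distrib_right)
  also have "\<dots> = (\<Sum>t<T. (Q t ?k - 1 / real T) * w t)"
    using Q_cols k unfolding m_def by (simp add: left_diff_distrib sum_subtractf sum_divide_distrib)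
  finally show ?thesis unfolding w_def .
qed

lemma expect_ip_pgrad_V:
  "sample_expect N T mu P Q (\<lambda>xs xo. ip_mu N N mu (pgrad_V N T mu V A xs xo) P)
     = (ip_mu N N mu V P - vnormsq N mu) * normsq_mu T N mu A - K_P N mu P * ip_mu T N mu A Q"
proof -
  let ?r = "resid N T V A" and ?c = "\<lambda>i. \<Sum>j<N. P i j * (mu j)\<^sup>2"
  have "sample_expect N T mu P Q (\<lambda>xs xo. ip_mu N N mu (pgrad_V N T mu V A xs xo) P)
      = sample_expect N T mu P Q (\<lambda>xs xo. \<Sum>t<T. A t (xs T) * (\<Sum>i<N. P i (xs t) * ?r xs xo i))
        - sample_expect N T mu P Q (\<lambda>xs xo. \<Sum>i<N. ?c i / vnormsq N mu * ?r xs xo i)"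
    unfolding sample_expect_diff[symmetric] by (rule sample_expect_cong) (rule ip_pgrad_V)
  also have "sample_expect N T mu P Q (\<lambda>xs xo. \<Sum>i<N. ?c i / vnormsq N mu * ?r xs xo i) = 0"
    unfolding sample_expect_sum sample_expect_scale by (simp add: expect_resid_zero)
  also have "sample_expect N T mu P Q (\<lambda>xs xo. \<Sum>t<T. A t (xs T) * (\<Sum>i<N. P i (xs t) * ?r xs xo i))
      = (ip_mu N N mu P V - vnormsq N mu) * ip_mu T N mu A A
        - (ip_mu N N mu P P - vnormsq N mu) * ip_mu T N mu Q A"
    by (rule expect_resid_pairing[OF P_mu])
  finally show ?thesis
    unfolding K_P_def normsq_mu_def by (simp add: ip_mu_commute[of N N mu P V] ip_mu_commute[of T N mu Q A])
qed

lemma expect_ip_pgrad_A: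
  "sample_expect N T mu P Q (\<lambda>xs xo. ip_mu T N mu (pgrad_A N T mu V A xs xo) Q)
     = (normsq_mu N N mu V - vnormsq N mu) * (ip_mu T N mu A Q - 1 / real T)
       - (ip_mu N N mu V P - vnormsq N mu) * K_Q N T mu Q"
proof -
  let ?Z = "\<lambda>t j. Q t j - 1 / real T"
  have "sample_expect N T mu P Q (\<lambda>xs xo. ip_mu T N mu (pgrad_A N T mu V A xs xo) Q)
      = sample_expect N T mu P Q
          (\<lambda>xs xo. \<Sum>t<T. ?Z t (xs T) * (\<Sum>i<N. V i (xs t) * resid N T V A xs xo i))"
    by (rule sample_expect_cong) (rule ip_pgrad_A)
  also have "\<dots> = (ip_mu N N mu V V - vnormsq N mu) * ip_mu T N mu ?Z A
      - (ip_mu N N mu P V - vnormsq N mu) * ip_mu T N mu Q ?Z"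
    by (rule expect_resid_pairing[OF V_mu])
  finally show ?thesis
    unfolding K_Q_def normsq_mu_def ip_mu_commute[of T N mu Q ?Z]
      ip_mu_shift_uniform[OF mu_sum A_cols] ip_mu_shift_uniform[OF mu_sum Q_cols]
    by (simp add: ip_mu_commute[of N N mu P V] ip_mu_commute[of T N mu Q A])
qed

lemma normsq_Delta_V:
  assumes KP: "K_P N mu P \<noteq> 0"
  shows "normsq_mu N N mu (Delta_V N mu P V)
       = normsq_mu N N mu V - vnormsq N mu - (alpha_V N mu P V)\<^sup>2 * K_P N mu P"
proof -
  let ?a = "alpha_V N mu P V"
  have centered: "Delta_V N mu P V = (\<lambda>i j. (V i j - mu i) - ?a * (P i j - mu i))"
    unfolding Delta_V_def by (simp add: algebra_simps)
  have "normsq_mu N N mu (Delta_V N mu P V)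
      = (normsq_mu N N mu V - vnormsq N mu) - 2 * ?a * (ip_mu N N mu V P - vnormsq N mu) + ?a\<^sup>2 * K_P N mu P"
    unfolding centered K_P_def normsq_mu_diff_scaled
    by (simp add: normsq_mu_def ip_mu_center_mu[OF mu_sum] V_mu P_mu)
  also have "ip_mu N N mu V P - vnormsq N mu = ?a * K_P N mu P"
    using KP by (simp add: alpha_V_def)
  finally show ?thesis by (simp add: power2_eq_square algebra_simps)
qed

lemma normsq_Delta_A:
  assumes KQ: "K_Q N T mu Q \<noteq> 0"
  shows "normsq_mu T N mu (Delta_A N T mu Q A)
       = normsq_mu T N mu A - 1 / real T - (alpha_A N T mu Q A)\<^sup>2 * K_Q N T mu Q"
proof -
  let ?b = "alpha_A N T mu Q A"
  have centered: "Delta_A N T mu Q A = (\<lambda>t j. (A t j - 1 / real T) - ?b * (Q t j - 1 / real T))"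
    unfolding Delta_A_def by (simp add: algebra_simps diff_divide_distrib)
  have "normsq_mu T N mu (Delta_A N T mu Q A)
      = (normsq_mu T N mu A - 1 / real T) - 2 * ?b * (ip_mu T N mu A Q - 1 / real T) + ?b\<^sup>2 * K_Q N T mu Q"
    unfolding centered K_Q_def normsq_mu_diff_scaled
    by (simp add: normsq_mu_def ip_mu_center_uniform[OF mu_sum] A_cols Q_cols)
  also have "ip_mu T N mu A Q - 1 / real T = ?b * K_Q N T mu Q"
    using KQ by (simp add: alpha_A_def)
  finally show ?thesis by (simp add: power2_eq_square algebra_simps)
qed

lemma alpha_V_update:
  assumes KP: "K_P N mu P \<noteq> 0" and KQ: "K_Q N T mu Q \<noteq> 0"
  shows "alpha_V N mu P (\<lambda>i j. V i j - eta * expect_mat N T mu P Q (pgrad_V N T mu V A) i j - eta * h i j)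
     = alpha_V N mu P V
       + eta * K_Q N T mu Q * (1 - alpha_A N T mu Q A * alpha_V N mu P V) * alpha_A N T mu Q A
       + eta * (1 - alpha_V N mu P V) / real T
       - eta * alpha_V N mu P V * normsq_mu T N mu (Delta_A N T mu Q A)
       - (eta / K_P N mu P) * ip_mu N N mu h P"
proof -
  let ?a = "alpha_V N mu P V" and ?b = "alpha_A N T mu Q A"
  have VP: "ip_mu N N mu V P = ?a * K_P N mu P + vnormsq N mu"
    using KP by (simp add: alpha_V_def)
  have AQ: "ip_mu T N mu A Q = ?b * K_Q N T mu Q + 1 / real T"
    using KQ by (simp add: alpha_A_def)
  have AA: "normsq_mu T N mu A = normsq_mu T N mu (Delta_A N T mu Q A) + 1 / real T + ?b\<^sup>2 * K_Q N T mu Q"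
    using normsq_Delta_A[OF KQ] by simp
  have "alpha_V N mu P (\<lambda>i j. V i j - eta * expect_mat N T mu P Q (pgrad_V N T mu V A) i j - eta * h i j)
      = (ip_mu N N mu V P - vnormsq N mu
         - eta * ((ip_mu N N mu V P - vnormsq N mu) * normsq_mu T N mu A - K_P N mu P * ip_mu T N mu A Q)
         - eta * ip_mu N N mu h P) / K_P N mu P"
    unfolding alpha_V_def ip_mu_diff_left ip_mu_scale_left ip_mu_expect_mat expect_ip_pgrad_V
    by (simp add: algebra_simps)
  also have "\<dots> = ?a + eta * K_Q N T mu Q * (1 - ?b * ?a) * ?b + eta * (1 - ?a) / real T
      - eta * ?a * normsq_mu T N mu (Delta_A N T mu Q A) - (eta / K_P N mu P) * ip_mu N N mu h P"
    unfolding VP AQ AA using KP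
    by (simp add: field_simps power2_eq_square) (simp add: diff_divide_distrib)
  finally show ?thesis .
qed

lemma alpha_A_update:
  assumes KP: "K_P N mu P \<noteq> 0" and KQ: "K_Q N T mu Q \<noteq> 0"
  shows "alpha_A N T mu Q (\<lambda>t j. A t j - eta * expect_mat N T mu P Q (pgrad_A N T mu V A) t j - eta * h t j)
     = alpha_A N T mu Q A
       + eta * K_P N mu P * (1 - alpha_V N mu P V * alpha_A N T mu Q A) * alpha_V N mu P V
       - eta * alpha_A N T mu Q A * normsq_mu N N mu (Delta_V N mu P V)
       - (eta / K_Q N T mu Q) * ip_mu T N mu h Q"
proof -
  let ?a = "alpha_V N mu P V" and ?b = "alpha_A N T mu Q A"
  have VP: "ip_mu N N mu V P = ?a * K_P N mu P + vnormsq N mu"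
    using KP by (simp add: alpha_V_def)
  have AQ: "ip_mu T N mu A Q = ?b * K_Q N T mu Q + 1 / real T"
    using KQ by (simp add: alpha_A_def)
  have VV: "normsq_mu N N mu V = normsq_mu N N mu (Delta_V N mu P V) + vnormsq N mu + ?a\<^sup>2 * K_P N mu P"
    using normsq_Delta_V[OF KP] by simp
  have "alpha_A N T mu Q (\<lambda>t j. A t j - eta * expect_mat N T mu P Q (pgrad_A N T mu V A) t j - eta * h t j)
      = (ip_mu T N mu A Q - 1 / real T
         - eta * ((normsq_mu N N mu V - vnormsq N mu) * (ip_mu T N mu A Q - 1 / real T)
                  - (ip_mu N N mu V P - vnormsq N mu) * K_Q N T mu Q)
         - eta * ip_mu T N mu h Q) / K_Q N T mu Q"
    unfolding alpha_A_def ip_mu_diff_left ip_mu_scale_left ip_mu_expect_mat expect_ip_pgrad_A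
    by (simp add: algebra_simps)
  also have "\<dots> = ?b + eta * K_P N mu P * (1 - ?a * ?b) * ?a
      - eta * ?b * normsq_mu N N mu (Delta_V N mu P V) - (eta / K_Q N T mu Q) * ip_mu T N mu h Q"
    unfolding VP AQ VV using KQ by (simp add: field_simps power2_eq_square)
  finally show ?thesis .
qed

end

theorem lemmaC5:
  fixes N T B :: nat
    and mu :: vec and P Q V A :: mat
    and eta_V eta_A :: real
    and bx :: "nat \<Rightarrow> nat \<Rightarrow> nat" and bo :: "nat \<Rightarrow> nat"
    and EgV EgA hV hA V' A' :: mat
  assumes mu_pos: "\<forall>i<N. mu i > 0"
    and mu_sum: "(\<Sum>i<N. mu i) = 1"
    and P_nonneg: "\<forall>i<N. \<forall>j<N. P i j \<ge> 0"
    and P_cols: "\<forall>j<N. (\<Sum>i<N. P i j) = 1"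
    and P_mu: "\<forall>i<N. (\<Sum>j<N. P i j * mu j) = mu i"
    and Q_nonneg: "\<forall>t<T. \<forall>j<N. Q t j \<ge> 0"
    and Q_cols: "\<forall>j<N. (\<Sum>t<T. Q t j) = 1"
    and KP_pos: "K_P N mu P > 0"
    and KQ_pos: "K_Q N T mu Q > 0"
    and V_cols: "\<forall>j<N. (\<Sum>i<N. V i j) = 1"
    and A_cols: "\<forall>j<N. (\<Sum>t<T. A t j) = 1"
    and V_mu: "\<forall>i<N. (\<Sum>j<N. V i j * mu j) = mu i"
    and eta_V_pos: "eta_V > 0" and eta_A_pos: "eta_A > 0"
    and B_pos: "B > 0"
    and batch: "\<forall>b<B. bx b \<in> sample_seqs N T \<and> bo b < N"
    and EgV_def: "EgV = expect_mat N T mu P Q (pgrad_V N T mu V A)"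
    and EgA_def: "EgA = expect_mat N T mu P Q (pgrad_A N T mu V A)"
    and hV_def: "hV = (\<lambda>i j. batch_mat B bx bo (pgrad_V N T mu V A) i j - EgV i j)"
    and hA_def: "hA = (\<lambda>i j. batch_mat B bx bo (pgrad_A N T mu V A) i j - EgA i j)"
    and V'_def: "V' = (\<lambda>i j. V i j - eta_V * EgV i j - eta_V * hV i j)"
    and A'_def: "A' = (\<lambda>t j. A t j - eta_A * EgA t j - eta_A * hA t j)"
  shows "(alpha_V N mu P V' =
           alpha_V N mu P V
           + eta_V * K_Q N T mu Q * (1 - alpha_A N T mu Q A * alpha_V N mu P V) * alpha_A N T mu Q A
           + eta_V * (1 - alpha_V N mu P V) / real T
           - eta_V * alpha_V N mu P V * normsq_mu T N mu (Delta_A N T mu Q A)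
           - (eta_V / K_P N mu P) * ip_mu N N mu hV P) \<and>
         (alpha_A N T mu Q A' =
           alpha_A N T mu Q A
           + eta_A * K_P N mu P * (1 - alpha_V N mu P V * alpha_A N T mu Q A) * alpha_V N mu P V
           - eta_A * alpha_A N T mu Q A * normsq_mu N N mu (Delta_V N mu P V)
           - (eta_A / K_Q N T mu Q) * ip_mu T N mu hA Q)"
proof -
  interpret constrained_iterate N T mu P Q V A
    using mu_pos mu_sum P_cols P_mu Q_cols V_cols A_cols V_mu by unfold_locales
  have KP: "K_P N mu P \<noteq> 0" and KQ: "K_Q N T mu Q \<noteq> 0"
    using KP_pos KQ_pos by simp_all
  show ?thesis
    unfolding V'_def A'_def EgV_def EgA_def
    using alpha_V_update[OF KP KQ] alpha_A_update[OF KP KQ] by simp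
qed

end
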